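(* Let $G$ be the Heawood graph. Then $M(G)=Z(G)=6$.
   Context: The Heawood graph is the bipartite incidence graph of the Fano plane: its $14$ vertices are the $7$ points $1,\dots,7$ and the $7$ lines $\{1,2,4\},\{2,3,5\},\{3,4,6\},\{4,5,7\},\{5,6,1\},\{6,7,2\},\{7,1,3\}$, and a point is adjacent to a line if and only if it lies on it; it is $3$-regular. For a graph $G$ on vertices $w_1,\dots,w_N$, $S(G)$ is the set of real symmetric $N\times N$ matrices $A$ with $a_{st}\neq 0$ for $s\ne t$ if and only if $w_s,w_t$ are adjacent (diagonal arbitrary); $M(G)$ is the maximum nullity of a matrix in $S(G)$. Zero forcing: color each vertex black or white; if a black vertex has exactly one white neighbor, that neighbor is recolored black. A set $Z$ is a zero forcing set if starting with exactly $Z$ black and applying this rule repeatedly makes all vertices black; $Z(G)$ is the minimum size of a zero forcing set. *)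

theory Defs
  imports "HOL-Analysis.Analysis"
begin

definition S_graph :: "('v::finite \<Rightarrow> 'v \<Rightarrow> bool) \<Rightarrow> (real^'v^'v) set" where
  "S_graph adj = {A. transpose A = A \<and>
                     (\<forall>s t. s \<noteq> t \<longrightarrow> (A $ s $ t \<noteq> 0 \<longleftrightarrow> adj s t))}"

definition nullity :: "real^'v^'v \<Rightarrow> nat" where
  "nullity A = dim {x :: real^'v. A *v x = 0}"

definition max_nullity :: "('v::finite \<Rightarrow> 'v \<Rightarrow> bool) \<Rightarrow> nat" where
  "max_nullity adj = Max (nullity ` S_graph adj)"

inductive_set forced :: "('v \<Rightarrow> 'v \<Rightarrow> bool) \<Rightarrow> 'v set \<Rightarrow> 'v set"
  for adj :: "'v \<Rightarrow> 'v \<Rightarrow> bool" and Z :: "'v set" where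
  init: "z \<in> Z \<Longrightarrow> z \<in> forced adj Z"
| force: "\<lbrakk>u \<in> forced adj Z; adj u w;
           \<And>w'. \<lbrakk>adj u w'; w' \<noteq> w\<rbrakk> \<Longrightarrow> w' \<in> forced adj Z\<rbrakk>
          \<Longrightarrow> w \<in> forced adj Z"

definition zero_forcing_set :: "('v \<Rightarrow> 'v \<Rightarrow> bool) \<Rightarrow> 'v set \<Rightarrow> bool" where
  "zero_forcing_set adj Z \<longleftrightarrow> forced adj Z = UNIV"

definition zero_forcing_number :: "('v::finite \<Rightarrow> 'v \<Rightarrow> bool) \<Rightarrow> nat" where
  "zero_forcing_number adj = Min (card ` {Z. zero_forcing_set adj Z})"

datatype heawood_vertex =
  P1 | P2 | P3 | P4 | P5 | P6 | P7
| L124 | L235 | L346 | L457 | L561 | L672 | L713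

lemma heawood_vertex_UNIV:
  "(UNIV :: heawood_vertex set) =
   {P1, P2, P3, P4, P5, P6, P7, L124, L235, L346, L457, L561, L672, L713}"
  using heawood_vertex.exhaust by blast

instance heawood_vertex :: finite
  by standard (simp add: heawood_vertex_UNIV)

fun line_points :: "heawood_vertex \<Rightarrow> heawood_vertex set" where
  "line_points L124 = {P1, P2, P4}"
| "line_points L235 = {P2, P3, P5}"
| "line_points L346 = {P3, P4, P6}"
| "line_points L457 = {P4, P5, P7}"
| "line_points L561 = {P5, P6, P1}"
| "line_points L672 = {P6, P7, P2}"
| "line_points L713 = {P7, P1, P3}"
| "line_points _ = {}"

definition heawood_adj :: "heawood_vertex \<Rightarrow> heawood_vertex \<Rightarrow> bool" where
  "heawood_adj x y \<longleftrightarrow> x \<in> line_points y \<or> y \<in> line_points x"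

end

theory Submission
  imports Defs
begin

text \<open>If a null vector x of A \<in> S(G) vanishes on a set Z, then the row of A at a vertex u that
  forces w reads A$u$w * x$w = 0, so x vanishes on every forced vertex; hence the nullity of A
  is at most the size of any zero forcing set, i.e. M(G) \<le> Z(G).

  For the Heawood graph take A = [[I, N], [N', 2I]] with N the point-line incidence matrix
  of the Fano plane. Since N'N = 2I + J, its kernel is {(-N l, l) : \<Sum>l = 0}, which has
  dimension 6. Conversely the points 1, 2, 3 with the lines {1,2,4}, {2,3,5}, {3,4,6} form a
  zero forcing set of size 6.\<close>

lemma null_vector_vanishes_on_forced:
  fixes A :: "real^'v::finite^'v"
  assumes A: "A \<in> S_graph adj" and null: "A *v x = 0" and vanish: "\<forall>z\<in>Z. x $ z = 0"
    and w: "w \<in> forced adj Z"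
  shows "x $ w = 0"
  using w
proof induction
  case (init z)
  then show ?case using vanish by simp
next
  case (force u w)
  show ?case
  proof (cases "w = u")
    case True
    with force show ?thesis by simp
  next
    case False
    have offdiag: "s \<noteq> t \<Longrightarrow> A $ s $ t \<noteq> 0 \<longleftrightarrow> adj s t" for s t
      using A unfolding S_graph_def by blast
    have others: "A $ u $ v * x $ v = 0" if "v \<noteq> w" for v
      using force offdiag[of u v] that by (cases "v = u \<or> adj u v") auto
    have "0 = (\<Sum>v\<in>UNIV. A $ u $ v * x $ v)"
      using null by (simp add: vec_eq_iff matrix_vector_mult_def)
    also have "\<dots> = A $ u $ w * x $ w + (\<Sum>v\<in>UNIV - {w}. A $ u $ v * x $ v)"
      by (simp add: sum.remove)
    also have "\<dots> = A $ u $ w * x $ w"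
      using others by (simp add: sum.neutral)
    finally show ?thesis
      using offdiag[of u w] False force(2) by simp
  qed
qed

lemma dim_le_card_if_determined_on:
  fixes N :: "(real^'n) set"
  assumes "subspace N" and determined: "\<And>x. x \<in> N \<Longrightarrow> \<forall>i\<in>Z. x $ i = 0 \<Longrightarrow> x = 0"
  shows "dim N \<le> card Z"
proof -
  define P where "P x = (\<Sum>i\<in>Z. x $ i *\<^sub>R axis i (1::real))" for x :: "real^'n"
  have "linear P"
    unfolding P_def by (rule linearI) (simp_all add: scaleR_add_left sum.distrib scaleR_sum_right)
  have P_component: "P x $ j = (if j \<in> Z then x $ j else 0)" for x j
    unfolding P_def by (simp add: sum_component axis_def if_distrib sum.delta cong: if_cong)
  have "inj_on P N"
  proof (rule linear_injective_on_subspace_0[OF \<open>linear P\<close> \<open>subspace N\<close>, THEN iffD2],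
      intro ballI impI)
    fix x assume "x \<in> N" "P x = 0"
    then show "x = 0"
      using determined P_component by (metis zero_index)
  qed
  have "dim N = dim (P ` N)"
    using dim_image_eq[OF \<open>linear P\<close>, of N] \<open>inj_on P N\<close> \<open>subspace N\<close>
    by (simp add: span_eq_iff[THEN iffD2])
  also have "\<dots> \<le> card ((\<lambda>i. axis i (1::real)) ` Z)"
    by (rule dim_le_card) (auto simp: P_def intro!: span_sum[OF span_scale[OF span_base]])
  also have "\<dots> \<le> card Z"
    by (rule card_image_le) simp
  finally show ?thesis .
qed

lemma forced_if_other_neighbours_forced:
  assumes "u \<in> forced adj Z" "adj u w" "{w'. adj u w'} \<subseteq> insert w (forced adj Z)"
  shows "w \<in> forced adj Z"
  by (rule forced.force[OF assms(1,2)]) (use assms(3) in auto)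

lemma nullity_le_card_zero_forcing_set:
  fixes A :: "real^'v::finite^'v"
  assumes A: "A \<in> S_graph adj" and Z: "zero_forcing_set adj Z"
  shows "nullity A \<le> card Z"
  unfolding nullity_def
proof (rule dim_le_card_if_determined_on)
  show "subspace {x. A *v x = 0}"
    by (auto simp: subspace_def matrix_vector_right_distrib matrix_vector_mult_scaleR)
  fix x assume "x \<in> {x. A *v x = 0}" "\<forall>i\<in>Z. x $ i = 0"
  then show "x = 0"
    using null_vector_vanishes_on_forced[OF A, of x Z] Z
    by (simp add: zero_forcing_set_def vec_eq_iff)
qed

lemma card_le_nullity:
  fixes A :: "real^'n^'n" and f :: "'n \<Rightarrow> real^'n"
  assumes null: "\<And>L. L \<in> I \<Longrightarrow> A *v f L = 0"
    and delta: "\<And>L K. L \<in> I \<Longrightarrow> K \<in> I \<Longrightarrow> f L $ K = (if K = L then 1 else 0)"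
  shows "card I \<le> nullity A"
proof -
  have "inj_on f I"
    by (rule inj_onI) (metis delta zero_neq_one)
  have "independent (f ` I)"
  proof (rule independent_if_scalars_zero)
    show "finite (f ` I)" by simp
    fix c v assume sum0: "(\<Sum>v\<in>f ` I. c v *\<^sub>R v) = 0" and "v \<in> f ` I"
    then obtain K where K: "K \<in> I" "v = f K" by blast
    have "0 = (\<Sum>L\<in>I. c (f L) *\<^sub>R f L) $ K"
      using sum0 by (simp add: sum.reindex[OF \<open>inj_on f I\<close>])
    also have "\<dots> = c v"
      using K by (simp add: sum_component delta if_distrib sum.delta cong: if_cong)
    finally show "c v = 0" ..
  qed
  then have "card (f ` I) \<le> nullity A"
    unfolding nullity_def by (intro independent_card_le_dim) (use null in auto)
  then show ?thesis
    by (simp add: card_image[OF \<open>inj_on f I\<close>])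
qed

lemma max_nullity_and_zero_forcing_number_eq:
  fixes A :: "real^'v::finite^'v"
  assumes A: "A \<in> S_graph adj" and Z: "zero_forcing_set adj Z" and "card Z \<le> nullity A"
  shows "max_nullity adj = card Z \<and> zero_forcing_number adj = card Z"
proof
  have nullity_le: "\<And>B. B \<in> S_graph adj \<Longrightarrow> nullity B \<le> card Z"
    using nullity_le_card_zero_forcing_set[OF _ Z] .
  have "nullity A = card Z"
    using nullity_le[OF A] assms(3) by simp
  moreover have "finite (nullity ` S_graph adj)"
    by (rule finite_subset[of _ "{..card Z}"]) (auto dest: nullity_le)
  ultimately show "max_nullity adj = card Z"
    unfolding max_nullity_def using A nullity_le
    by (intro Max_eqI) (auto intro: image_eqI[of _ _ A])
  have "card Z \<le> card Z'" if "zero_forcing_set adj Z'" for Z'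
    using nullity_le_card_zero_forcing_set[OF A that] assms(3) by simp
  then show "zero_forcing_number adj = card Z"
    unfolding zero_forcing_number_def using Z
    by (intro Min_eqI) (auto intro: image_eqI[of _ _ Z])
qed

definition heawood_matrix :: "real^heawood_vertex^heawood_vertex" where
  "heawood_matrix = (\<chi> i j. if i = j then (if line_points i = {} then 1 else 2)
                           else if heawood_adj i j then 1 else 0)"

lemma heawood_matrix_in_S_graph: "heawood_matrix \<in> S_graph heawood_adj"
  unfolding S_graph_def heawood_matrix_def
  by (auto simp: vec_eq_iff transpose_def heawood_adj_def)

definition heawood_kernel_lines :: "heawood_vertex set" where
  "heawood_kernel_lines = {L124, L235, L346, L457, L561, L672}"

text \<open>The kernel vector (-N l, l) for l = e_L - e_L713, so that \<Sum>l = 0.\<close>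

definition heawood_kernel_vector :: "heawood_vertex \<Rightarrow> real^heawood_vertex" where
  "heawood_kernel_vector L = (\<chi> i.
     (if i = L then 1 else 0) - (if i = L713 then 1 else 0)
     - (if i \<in> line_points L then 1 else 0) + (if i \<in> line_points L713 then 1 else 0))"

lemma heawood_kernel_vector_null:
  assumes "L \<in> heawood_kernel_lines"
  shows "heawood_matrix *v heawood_kernel_vector L = 0"
proof -
  have "(heawood_matrix *v heawood_kernel_vector L) $ i = 0" for i
    using assms unfolding heawood_kernel_lines_def
    by (cases i) (auto simp: matrix_vector_mult_def heawood_vertex_UNIV heawood_matrix_def
        heawood_kernel_vector_def heawood_adj_def)
  then show ?thesis by (simp add: vec_eq_iff)
qed

lemma six_le_nullity_heawood_matrix: "6 \<le> nullity heawood_matrix"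
proof -
  have "card heawood_kernel_lines \<le> nullity heawood_matrix"
    by (rule card_le_nullity[of _ _ heawood_kernel_vector] heawood_kernel_vector_null)+
      (auto simp: heawood_kernel_lines_def heawood_kernel_vector_def)
  then show ?thesis by (simp add: heawood_kernel_lines_def)
qed

fun heawood_neighbours :: "heawood_vertex \<Rightarrow> heawood_vertex set" where
  "heawood_neighbours P1 = {L124, L561, L713}"
| "heawood_neighbours P2 = {L124, L235, L672}"
| "heawood_neighbours P3 = {L235, L346, L713}"
| "heawood_neighbours P4 = {L124, L346, L457}"
| "heawood_neighbours P5 = {L235, L457, L561}"
| "heawood_neighbours P6 = {L346, L561, L672}"
| "heawood_neighbours P7 = {L457, L672, L713}"
| "heawood_neighbours L = line_points L"

lemma heawood_adj_iff_neighbours: "heawood_adj u w \<longleftrightarrow> w \<in> heawood_neighbours u"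
  by (cases u; cases w; simp add: heawood_adj_def)

lemma heawood_forced_step:
  assumes "u \<in> forced heawood_adj Z" "w \<in> heawood_neighbours u"
    "heawood_neighbours u \<subseteq> insert w (forced heawood_adj Z)"
  shows "w \<in> forced heawood_adj Z"
  by (rule forced_if_other_neighbours_forced[OF assms(1)])
    (use assms(2,3) in \<open>auto simp: heawood_adj_iff_neighbours\<close>)

definition heawood_forcing_set :: "heawood_vertex set" where
  "heawood_forcing_set = {P1, P2, P3, L124, L235, L346}"

lemma zero_forcing_set_heawood: "zero_forcing_set heawood_adj heawood_forcing_set"
proof -
  let ?F = "forced heawood_adj heawood_forcing_set"
  have init: "P1 \<in> ?F" "P2 \<in> ?F" "P3 \<in> ?F" "L124 \<in> ?F" "L235 \<in> ?F" "L346 \<in> ?F"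
    by (auto intro: forced.init simp: heawood_forcing_set_def)
  have L672: "L672 \<in> ?F" by (rule heawood_forced_step[OF init(2)]) (auto simp: init)
  have L713: "L713 \<in> ?F" by (rule heawood_forced_step[OF init(3)]) (auto simp: init)
  have P4: "P4 \<in> ?F" by (rule heawood_forced_step[OF init(4)]) (auto simp: init)
  have P5: "P5 \<in> ?F" by (rule heawood_forced_step[OF init(5)]) (auto simp: init)
  have P6: "P6 \<in> ?F" by (rule heawood_forced_step[OF init(6)]) (auto simp: init P4)
  have P7: "P7 \<in> ?F" by (rule heawood_forced_step[OF L672]) (auto simp: init P6)
  have L561: "L561 \<in> ?F" by (rule heawood_forced_step[OF init(1)]) (auto simp: init L713)
  have L457: "L457 \<in> ?F" by (rule heawood_forced_step[OF P4]) (auto simp: init)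
  have "UNIV \<subseteq> ?F"
    unfolding heawood_vertex_UNIV using init L672 L713 P4 P5 P6 P7 L561 L457 by simp
  then show ?thesis
    unfolding zero_forcing_set_def by blast
qed

theorem mainTheorem8:
  shows "max_nullity heawood_adj = 6 \<and> zero_forcing_number heawood_adj = 6"
  using max_nullity_and_zero_forcing_number_eq[OF heawood_matrix_in_S_graph
      zero_forcing_set_heawood] six_le_nullity_heawood_matrix
  by (simp add: heawood_forcing_set_def)

end
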